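(* Let $n\ge1$ and let $\mathcal{S}(\vec u,\vec v,\vec a,\vec d)$ be the lexicographic-order specification over $n$ variables defined below, with order constraint $\mathcal{O}(\vec d)=\{d_n\ge1\}$. Then there is a cutting planes derivation of size $O(n)$ of $f_n\ge1$ from $\mathcal{S}(\vec x,\vec y,\vec a,\vec d)\cup\{d_n\ge1\}\cup\mathcal{S}(\vec y,\vec z,\vec b,\vec e)\cup\{e_n\ge1\}\cup\mathcal{S}(\vec x,\vec z,\vec c,\vec f)$, where $\vec x,\vec y,\vec z$ are disjoint lists of $n$ variables and $(\vec a,\vec d),(\vec b,\vec e),(\vec c,\vec f)$ are disjoint lists of fresh auxiliary variables. That is, transitivity of the order can be proved by a cutting planes derivation of size $O(n)$.
   Context: Literals are $x$ or $\bar x=1-x$; a PB constraint is $\sum_i c_i\ell_i\ge A$. The specification $\mathcal{S}(\vec u,\vec v,\vec a,\vec d)$ (variables $u_1..u_n$, $v_1..v_n$, $a_1..a_{n-1}$, $d_1..d_n$) consists of: $\bar a_1+u_1+\bar v_1\ge1$; $2a_1+\bar u_1+v_1\ge2$; for $1\le i\le n-2$: $3\bar a_{i+1}+2a_i+u_{i+1}+\bar v_{i+1}\ge3$ and $2a_{i+1}+2\bar a_i+\bar u_{i+1}+v_{i+1}\ge2$; $\bar d_1+v_1+\bar u_1\ge1$; $2d_1+\bar v_1+u_1\ge2$; for $1\le i\le n-1$: $4\bar d_{i+1}+3d_i+\bar a_i+v_{i+1}+\bar u_{i+1}\ge4$ and $4d_{i+1}+3\bar d_i+a_i+\bar v_{i+1}+u_{i+1}\ge3$.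 $\mathcal{S}(\vec x,\vec y,\vec a,\vec d)$ denotes substitution of $\vec x,\vec y$ (and the given auxiliary lists) for $\vec u,\vec v$ (and $\vec a,\vec d$). Cutting planes derivation: a sequence of constraints, each a premise, a literal axiom $\ell\ge0$, or obtained from earlier ones by addition, multiplication by a positive integer, division by a positive integer with rounding up of coefficients and degree, or saturation ($\sum c_i\ell_i\ge A\mapsto\sum\min(c_i,A)\ell_i\ge A$), with weakening (adding literal axioms to eliminate a term) as derived rule. The size of a derivation is the total size of the constraints in it. *)

theory Defs
  imports Main
begin

datatype 'v lit = Pos 'v | Neg 'v   \<comment> \<open>Pos x is x, Neg x is the negated literal 1 - x\<close>

text \<open>A PB constraint written as a list of (coefficient, literal) terms and a degree:
  sum_i c_i l_i >= A.\<close>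
type_synonym 'v pbc = "(int \<times> 'v lit) list \<times> int"

text \<open>A constraint is kept in the canonical form sum_v L(v) x_v >= R over variables
  (integer coefficients, finite support).  It corresponds to the normalised literal form
  in which a variable v with L(v) > 0 occurs as the literal v with coefficient L(v), a
  variable with L(v) < 0 occurs as the negated literal with coefficient -L(v), and the
  degree is R + sum of the -L(v) over L(v) < 0 (using negated-x = 1 - x).\<close>
datatype 'v cons = Cons (lhs: "'v \<Rightarrow> int") (rhs: int)

definition lit_coeff :: "'v \<Rightarrow> int \<times> 'v lit \<Rightarrow> int" where
  "lit_coeff v t = (case snd t of Pos w \<Rightarrow> (if w = v then fst t else 0)
                                | Neg w \<Rightarrow> (if w = v then - fst t else 0))"

definition neg_const :: "int \<times> 'v lit \<Rightarrow> int" where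
  "neg_const t = (case snd t of Neg _ \<Rightarrow> fst t | Pos _ \<Rightarrow> 0)"

definition to_cons :: "'v pbc \<Rightarrow> 'v cons" where
  "to_cons p = Cons (\<lambda>v. sum_list (map (lit_coeff v) (fst p)))
                    (snd p - sum_list (map neg_const (fst p)))"

definition degree :: "'v cons \<Rightarrow> int" where
  "degree c = rhs c + (\<Sum>v\<in>{v. lhs c v < 0}. - lhs c v)"

definition cdiv :: "int \<Rightarrow> int \<Rightarrow> int" where  \<comment> \<open>ceiling of a / d for d > 0\<close>
  "cdiv a d = - ((- a) div d)"

definition cp_add :: "'v cons \<Rightarrow> 'v cons \<Rightarrow> 'v cons" where
  "cp_add c1 c2 = Cons (\<lambda>v. lhs c1 v + lhs c2 v) (rhs c1 + rhs c2)"

definition cp_mult :: "int \<Rightarrow> 'v cons \<Rightarrow> 'v cons" where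
  "cp_mult k c = Cons (\<lambda>v. k * lhs c v) (k * rhs c)"

text \<open>Rebuild a canonical constraint from literal coefficients (with sign recording polarity)
  and a literal-form degree.\<close>
definition from_lits :: "('v \<Rightarrow> int) \<Rightarrow> int \<Rightarrow> 'v cons" where
  "from_lits L A = Cons L (A - (\<Sum>v\<in>{v. L v < 0}. - L v))"

definition cp_div :: "int \<Rightarrow> 'v cons \<Rightarrow> 'v cons" where
  "cp_div d c = from_lits (\<lambda>v. sgn (lhs c v) * cdiv \<bar>lhs c v\<bar> d) (cdiv (degree c) d)"

text \<open>Saturation: each literal coefficient c_i replaced by min(c_i, A)
  (with A replaced by 0 when the degree is negative, where the constraint is trivial).\<close>
definition cp_sat :: "'v cons \<Rightarrow> 'v cons" where
  "cp_sat c = from_lits (\<lambda>v. sgn (lhs c v) * min \<bar>lhs c v\<bar> (max (degree c) 0)) (degree c)"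

definition lit_axiom :: "'v lit \<Rightarrow> 'v cons" where
  "lit_axiom l = to_cons ([(1, l)], 0)"

definition cp_step :: "'v pbc set \<Rightarrow> 'v cons list \<Rightarrow> 'v cons \<Rightarrow> bool" where
  "cp_step \<Gamma> prev c \<longleftrightarrow>
     (\<exists>p\<in>\<Gamma>. c = to_cons p)
   \<or> (\<exists>l. c = lit_axiom l)
   \<or> (\<exists>c1\<in>set prev. \<exists>c2\<in>set prev. c = cp_add c1 c2)
   \<or> (\<exists>c1\<in>set prev. \<exists>k>0. c = cp_mult k c1)
   \<or> (\<exists>c1\<in>set prev. \<exists>d>0. c = cp_div d c1)
   \<or> (\<exists>c1\<in>set prev. c = cp_sat c1)"

definition cp_derivation :: "'v pbc set \<Rightarrow> 'v cons list \<Rightarrow> bool" where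
  "cp_derivation \<Gamma> \<pi> \<longleftrightarrow> (\<forall>i<length \<pi>. cp_step \<Gamma> (take i \<pi>) (\<pi> ! i))"

fun bitsize :: "nat \<Rightarrow> nat" where
  "bitsize m = (if m < 2 then 1 else Suc (bitsize (m div 2)))"

definition cons_size :: "'v cons \<Rightarrow> nat" where
  "cons_size c = (\<Sum>v\<in>{v. lhs c v \<noteq> 0}. bitsize (nat \<bar>lhs c v\<bar>)) + bitsize (nat \<bar>degree c\<bar>)"

definition deriv_size :: "'v cons list \<Rightarrow> nat" where
  "deriv_size \<pi> = sum_list (map cons_size \<pi>)"

section \<open>The lexicographic-order specification S(u,v,a,d) over n variables (indices from 1)\<close>

definition spec :: "nat \<Rightarrow> (nat \<Rightarrow> 'v) \<Rightarrow> (nat \<Rightarrow> 'v) \<Rightarrow> (nat \<Rightarrow> 'v) \<Rightarrow> (nat \<Rightarrow> 'v) \<Rightarrow> 'v pbc set" where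
  "spec n u v a d =
     (if 2 \<le> n then
        {([(1, Neg (a 1)), (1, Pos (u 1)), (1, Neg (v 1))], 1),
         ([(2, Pos (a 1)), (1, Neg (u 1)), (1, Pos (v 1))], 2)}
      else {})
   \<union> {([(3, Neg (a (i+1))), (2, Pos (a i)), (1, Pos (u (i+1))), (1, Neg (v (i+1)))], 3)
       | i. 1 \<le> i \<and> i \<le> n - 2}
   \<union> {([(2, Pos (a (i+1))), (2, Neg (a i)), (1, Neg (u (i+1))), (1, Pos (v (i+1)))], 2)
       | i. 1 \<le> i \<and> i \<le> n - 2}
   \<union> {([(1, Neg (d 1)), (1, Pos (v 1)), (1, Neg (u 1))], 1),
      ([(2, Pos (d 1)), (1, Neg (v 1)), (1, Pos (u 1))], 2)}
   \<union> {([(4, Neg (d (i+1))), (3, Pos (d i)), (1, Neg (a i)), (1, Pos (v (i+1))), (1, Neg (u (i+1)))], 4)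
       | i. 1 \<le> i \<and> i \<le> n - 1}
   \<union> {([(4, Pos (d (i+1))), (3, Neg (d i)), (1, Pos (a i)), (1, Neg (v (i+1))), (1, Pos (u (i+1)))], 3)
       | i. 1 \<le> i \<and> i \<le> n - 1}"

datatype var = X nat | Y nat | Z nat | VA nat | VB nat | VC nat | VD nat | VE nat | VF nat

definition unit_pbc :: "'v \<Rightarrow> 'v pbc" where
  "unit_pbc x = ([(1, Pos x)], 1)"

definition trans_premises :: "nat \<Rightarrow> var pbc set" where
  "trans_premises n =
     spec n X Y VA VD \<union> {unit_pbc (VD n)} \<union>
     spec n Y Z VB VE \<union> {unit_pbc (VE n)} \<union>
     spec n X Z VC VF"

end

theory Submission
  imports Defs
begin

(* Read d_i, e_i, f_i as "x <= y", "y <= z", "x <= z" in the lexicographic order of the first i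
   coordinates, and a_i, b_i, c_i as "x >= y", "y >= z", "x >= z" coordinatewise on them (so that
   d_i and a_i together say that x and y agree there).  By induction on i we derive the clauses
     not d_i | not e_i | f_i,   not d_i | not e_i | not c_i | a_i,   not d_i | not e_i | not c_i | b_i.
   The step from i to i+1 only involves the premises with indices i and i+1, so it costs a constant
   number of lines of constant size; at i = n, resolving with d_n >= 1 and e_n >= 1 gives f_n >= 1.
   All reasoning is on clauses: a premise becomes a clause by adding multiples of literal axioms that
   cancel the unwanted literals and saturating, and resolving two clauses is an addition followed by
   a saturation. *)

section \<open>Constraints as literal coefficients and a degree\<close>

declare bitsize.simps [simp del]

lemma bitsize_ge_1: "1 \<le> bitsize m"
  by (subst bitsize.simps) simp

lemma bitsize_mono: "m \<le> m' \<Longrightarrow> bitsize m \<le> bitsize m'"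
proof (induction m' arbitrary: m rule: bitsize.induct)
  case (1 m')
  show ?case
  proof (cases "m < 2")
    case True
    then show ?thesis using bitsize_ge_1[of m'] by (simp add: bitsize.simps[of m])
  next
    case False
    with "1.prems" have "\<not> m' < 2" "m div 2 \<le> m' div 2" by (auto intro: div_le_mono)
    with "1.IH" False show ?thesis by (simp add: bitsize.simps[of m] bitsize.simps[of m'])
  qed
qed

lemma bitsize_numeral [simp]:
  "bitsize 0 = 1" "bitsize 1 = 1" "bitsize (Suc 0) = 1"
  "bitsize (numeral (Num.Bit0 k)) = Suc (bitsize (numeral k))"
  "bitsize (numeral (Num.Bit1 k)) = Suc (bitsize (numeral k))"
  by (subst bitsize.simps; simp add: numeral_Bit0_div_2 numeral_Bit1_div_2)+

fun lit_var :: "'v lit \<Rightarrow> 'v" where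
  "lit_var (Pos v) = v"
| "lit_var (Neg v) = v"

fun negate :: "'v lit \<Rightarrow> 'v lit" where
  "negate (Pos v) = Neg v"
| "negate (Neg v) = Pos v"

definition support :: "'v cons \<Rightarrow> 'v set" where
  "support c = {v. lhs c v \<noteq> 0}"

definition lit_map :: "'v lit set \<Rightarrow> 'v \<Rightarrow> int" where
  "lit_map S v = of_bool (Pos v \<in> S) - of_bool (Neg v \<in> S)"

lemma lit_map_singleton_eq_0: "lit_var l \<noteq> v \<Longrightarrow> lit_map {l} v = 0"
  by (cases l) (auto simp: lit_map_def)

lemma lit_map_singleton_eq_0_iff: "lit_map {l} v = 0 \<longleftrightarrow> v \<noteq> lit_var l"
  by (cases l) (auto simp: lit_map_def)

lemma abs_lit_map_self: "\<bar>lit_map {l} (lit_var l)\<bar> = 1"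
  by (cases l) (simp_all add: lit_map_def)

lemma finite_neg_lit_map: "finite S \<Longrightarrow> finite {v. lit_map S v < 0}"
  by (rule finite_subset[of _ "lit_var ` S"]) (auto simp: lit_map_def intro: rev_image_eqI[of "Neg _"])

lemma cons_eqI: "lhs c = lhs c' \<Longrightarrow> degree c = degree c' \<Longrightarrow> c = c'"
  by (cases c; cases c') (simp add: degree_def)

lemma degree_eq_sum:
  assumes "finite F" "support c \<subseteq> F"
  shows "degree c = rhs c + (\<Sum>v\<in>F. max 0 (- lhs c v))"
proof -
  have "{v. lhs c v < 0} = {v \<in> F. lhs c v < 0}"
    using assms(2) by (auto simp: support_def)
  then show ?thesis
    using assms(1) by (auto simp: degree_def sum.inter_filter max_def intro!: sum.cong)
qed

lemma lhs_from_lits [simp]: "lhs (from_lits L A) = L"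
  by (simp add: from_lits_def)

lemma degree_from_lits: "finite {v. L v < 0} \<Longrightarrow> degree (from_lits L A) = A"
  by (simp add: from_lits_def degree_def)

(* cancellation a b is min |a| |b| if a and b have opposite signs, and 0 otherwise. *)
definition cancellation :: "int \<Rightarrow> int \<Rightarrow> int" where
  "cancellation a b = max 0 (- a) + max 0 (- b) - max 0 (- (a + b))"

lemma support_cp_add: "support (cp_add c1 c2) \<subseteq> support c1 \<union> support c2"
  by (auto simp: support_def cp_add_def)

lemma degree_cp_add:
  assumes F: "finite F" and c1: "support c1 \<subseteq> F" and c2: "support c2 \<subseteq> F"
  shows "degree (cp_add c1 c2) = degree c1 + degree c2 - (\<Sum>v\<in>F. cancellation (lhs c1 v) (lhs c2 v))"
proof -
  have add: "support (cp_add c1 c2) \<subseteq> F"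
    using support_cp_add[of c1 c2] c1 c2 by auto
  have "degree (cp_add c1 c2) = rhs c1 + rhs c2 + (\<Sum>v\<in>F. max 0 (- (lhs c1 v + lhs c2 v)))"
    using degree_eq_sum[OF F add] by (simp add: cp_add_def)
  moreover have "degree c1 = rhs c1 + (\<Sum>v\<in>F. max 0 (- lhs c1 v))"
    using degree_eq_sum[OF F c1] .
  moreover have "degree c2 = rhs c2 + (\<Sum>v\<in>F. max 0 (- lhs c2 v))"
    using degree_eq_sum[OF F c2] .
  ultimately show ?thesis
    by (simp only: cancellation_def sum.distrib sum_subtractf)
qed

lemma degree_cp_mult: "0 < k \<Longrightarrow> degree (cp_mult k c) = k * degree c"
proof -
  assume k: "0 < k"
  then have "{v. k * lhs c v < 0} = {v. lhs c v < 0}"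
    by (auto simp: mult_less_0_iff)
  with k show ?thesis
    by (simp add: degree_def cp_mult_def sum_distrib_left algebra_simps)
qed

lemma lhs_cp_sat:
  "lhs (cp_sat c) v = sgn (lhs c v) * min \<bar>lhs c v\<bar> (max (degree c) 0)"
  by (simp add: cp_sat_def)

lemma degree_cp_sat: "finite (support c) \<Longrightarrow> degree (cp_sat c) = degree c"
  unfolding cp_sat_def
  by (rule degree_from_lits, erule finite_subset[rotated]) (auto simp: support_def)

lemma lit_axiom_eq_from_lits: "lit_axiom l = from_lits (lit_map {l}) 0"
proof (cases l)
  case (Neg v)
  have "{w. lit_map {Neg v} w < 0} = {v}" by (auto simp: lit_map_def)
  then show ?thesis
    by (simp add: Neg lit_axiom_def to_cons_def from_lits_def lit_coeff_def neg_const_def lit_map_def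
        fun_eq_iff)
qed (simp add: lit_axiom_def to_cons_def from_lits_def lit_coeff_def neg_const_def lit_map_def
     fun_eq_iff)

lemma lhs_lit_axiom: "lhs (lit_axiom l) = lit_map {l}"
  by (simp add: lit_axiom_eq_from_lits)

lemma degree_lit_axiom: "degree (lit_axiom l) = 0"
  by (simp add: lit_axiom_eq_from_lits degree_from_lits finite_neg_lit_map)

lemma cons_size_le:
  assumes F: "finite F" "support c \<subseteq> F" and B: "\<And>v. v \<in> F \<Longrightarrow> bitsize (nat \<bar>lhs c v\<bar>) \<le> B"
  shows "cons_size c \<le> card F * B + bitsize (nat \<bar>degree c\<bar>)"
proof -
  have "(\<Sum>v\<in>{v. lhs c v \<noteq> 0}. bitsize (nat \<bar>lhs c v\<bar>)) \<le> (\<Sum>v\<in>F. bitsize (nat \<bar>lhs c v\<bar>))"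
    using F by (intro sum_mono2) (auto simp: support_def)
  also have "\<dots> \<le> (\<Sum>v\<in>F. B)"
    using B by (rule sum_mono)
  finally show ?thesis
    by (simp add: cons_size_def)
qed

lemma cons_size_lit_axiom_le: "cons_size (lit_axiom l) \<le> 2"
proof -
  have "cons_size (lit_axiom l) \<le> card {lit_var l} * 1 + bitsize (nat \<bar>degree (lit_axiom l)\<bar>)"
    by (rule cons_size_le) (auto simp: support_def lhs_lit_axiom lit_map_singleton_eq_0_iff abs_lit_map_self)
  then show ?thesis
    by (simp add: degree_lit_axiom)
qed

lemma cons_size_mult_axiom_le: "0 < k \<Longrightarrow> cons_size (cp_mult k (lit_axiom l)) \<le> bitsize (nat k) + 1"
proof -
  assume k: "0 < k"
  have "cons_size (cp_mult k (lit_axiom l))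
      \<le> card {lit_var l} * bitsize (nat k) + bitsize (nat \<bar>degree (cp_mult k (lit_axiom l))\<bar>)"
  proof (rule cons_size_le)
    show "support (cp_mult k (lit_axiom l)) \<subseteq> {lit_var l}"
      by (auto simp: support_def cp_mult_def lhs_lit_axiom lit_map_singleton_eq_0_iff)
    show "bitsize (nat \<bar>lhs (cp_mult k (lit_axiom l)) v\<bar>) \<le> bitsize (nat k)" if "v \<in> {lit_var l}" for v
      using that k by (cases l) (simp_all add: cp_mult_def lhs_lit_axiom lit_map_def)
  qed simp
  then show ?thesis
    using k by (simp add: degree_cp_mult degree_lit_axiom)
qed

section \<open>Clauses and resolution\<close>

definition consistent :: "'v lit set \<Rightarrow> bool" where
  "consistent S \<longleftrightarrow> (\<forall>v. \<not> (Pos v \<in> S \<and> Neg v \<in> S))"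

definition clause :: "'v lit set \<Rightarrow> 'v cons" where
  "clause S = from_lits (lit_map S) 1"

lemma lhs_clause [simp]: "lhs (clause S) = lit_map S"
  by (simp add: clause_def)

lemma support_clause: "support (clause S) \<subseteq> lit_var ` S"
  by (auto simp: support_def lit_map_def intro: rev_image_eqI[of "Pos _"] rev_image_eqI[of "Neg _"])

lemma finite_support_clause: "finite S \<Longrightarrow> finite (support (clause S))"
  using support_clause by (rule finite_subset) simp

lemma degree_clause: "finite S \<Longrightarrow> degree (clause S) = 1"
  by (simp add: clause_def degree_from_lits finite_neg_lit_map)

lemma cons_size_clause_le: "finite S \<Longrightarrow> cons_size (clause S) \<le> card S + 1"
proof -
  assume S: "finite S"
  have "bitsize (nat \<bar>lit_map S v\<bar>) \<le> 1" for v
    using bitsize_mono[of "nat \<bar>lit_map S v\<bar>" 1] by (simp add: lit_map_def)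
  then have "cons_size (clause S) \<le> card (lit_var ` S) * 1 + bitsize (nat \<bar>degree (clause S)\<bar>)"
    using S by (intro cons_size_le support_clause) simp_all
  then show ?thesis
    using card_image_le[OF S, of lit_var] by (simp add: degree_clause[OF S])
qed

definition resolvent :: "'v \<Rightarrow> 'v lit set \<Rightarrow> 'v lit set \<Rightarrow> 'v lit set \<Rightarrow> bool" where
  "resolvent x S T R \<longleftrightarrow> Pos x \<in> S \<and> Neg x \<in> T \<and> R = S - {Pos x} \<union> (T - {Neg x}) \<and>
     consistent R \<and> x \<notin> lit_var ` R"

lemma resolvent_lit_map:
  assumes "resolvent x S T R"
  shows "cancellation (lit_map S v) (lit_map T v) = of_bool (v = x)"
    and "sgn (lit_map S v + lit_map T v) = lit_map R v"
    and "lit_map S v + lit_map T v \<noteq> 0 \<Longrightarrow> v \<in> lit_var ` R"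
    and "\<bar>lit_map S v + lit_map T v\<bar> \<le> 2"
proof -
  have R: "R = S - {Pos x} \<union> (T - {Neg x})" "consistent R" "x \<notin> lit_var ` R"
    and x: "Pos x \<in> S" "Neg x \<in> T"
    using assms by (auto simp: resolvent_def)
  have x_not: "Neg x \<notin> S" "Pos x \<notin> T"
    using R by (auto intro: rev_image_eqI[of "Neg x"] rev_image_eqI[of "Pos x"])
  have "\<not> (Pos v \<in> R \<and> Neg v \<in> R)"
    using R(2) by (auto simp: consistent_def)
  then show "cancellation (lit_map S v) (lit_map T v) = of_bool (v = x)"
    and "sgn (lit_map S v + lit_map T v) = lit_map R v"
    and "lit_map S v + lit_map T v \<noteq> 0 \<Longrightarrow> v \<in> lit_var ` R"
    and "\<bar>lit_map S v + lit_map T v\<bar> \<le> 2"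
    using x x_not R(3) unfolding R(1)
    by (auto simp: lit_map_def cancellation_def intro: rev_image_eqI[of "Pos v"] rev_image_eqI[of "Neg v"])
qed

lemma degree_add_resolvent:
  assumes "resolvent x S T R" "finite S" "finite T"
  shows "degree (cp_add (clause S) (clause T)) = 1"
proof -
  let ?F = "lit_var ` (S \<union> T)"
  have x: "x \<in> ?F"
    using assms(1) by (auto simp: resolvent_def intro: rev_image_eqI[of "Pos x"])
  have "degree (cp_add (clause S) (clause T)) = 1 + 1 - (\<Sum>v\<in>?F. of_bool (v = x))"
    using assms support_clause[of S] support_clause[of T]
    by (subst degree_cp_add[where F = ?F]) (auto simp: degree_clause resolvent_lit_map)
  also have "\<dots> = 1"
    using x assms(2,3) by (simp add: sum.delta')
  finally show ?thesis .
qed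

lemma sgn_mult_min_1: "sgn s * min \<bar>s\<bar> 1 = sgn (s :: int)"
  by (cases s "0::int" rule: linorder_cases) auto

lemma sat_add_resolvent:
  assumes "resolvent x S T R" "finite S" "finite T"
  shows "cp_sat (cp_add (clause S) (clause T)) = clause R"
proof (rule cons_eqI)
  let ?c = "cp_add (clause S) (clause T)"
  have deg: "degree ?c = 1"
    using degree_add_resolvent[OF assms] .
  show "lhs (cp_sat ?c) = lhs (clause R)"
  proof
    fix v
    have "lhs (cp_sat ?c) v = sgn (lit_map S v + lit_map T v) * min \<bar>lit_map S v + lit_map T v\<bar> 1"
      by (simp add: lhs_cp_sat deg del: sgn_mult_min_1) (simp add: cp_add_def)
    also have "\<dots> = lit_map R v"
      by (subst sgn_mult_min_1) (rule resolvent_lit_map(2)[OF assms(1)])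
    finally show "lhs (cp_sat ?c) v = lhs (clause R) v"
      by simp
  qed
  have "finite (support ?c)"
    using support_cp_add finite_support_clause assms(2,3) by (metis finite_Un finite_subset)
  moreover have "finite R"
    using assms by (simp add: resolvent_def)
  ultimately show "degree (cp_sat ?c) = degree (clause R)"
    by (simp add: degree_cp_sat deg degree_clause)
qed

lemma cons_size_add_resolvent_le:
  assumes "resolvent x S T R" "finite S" "finite T"
  shows "cons_size (cp_add (clause S) (clause T)) \<le> 2 * card R + 1"
proof -
  have R: "finite R"
    using assms by (simp add: resolvent_def)
  have "cons_size (cp_add (clause S) (clause T)) \<le> card (lit_var ` R) * 2 + bitsize (nat \<bar>1\<bar>)"
  proof (subst degree_add_resolvent[OF assms, symmetric], rule cons_size_le)
    show "support (cp_add (clause S) (clause T)) \<subseteq> lit_var ` R"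
      using resolvent_lit_map(3)[OF assms(1)] by (auto simp: support_def cp_add_def)
    show "bitsize (nat \<bar>lhs (cp_add (clause S) (clause T)) v\<bar>) \<le> 2" for v
    proof -
      have "nat \<bar>lit_map S v + lit_map T v\<bar> \<le> 2"
        using resolvent_lit_map(4)[OF assms(1), of v] by (simp add: nat_le_iff)
      then show ?thesis
        using bitsize_mono by (fastforce simp: cp_add_def)
    qed
  qed (use R in simp)
  then show ?thesis
    using card_image_le[OF R, of lit_var] by simp
qed

lemma cp_add_clause_axiom:
  assumes "finite S" "lit_var l \<notin> lit_var ` S"
  shows "cp_add (clause S) (lit_axiom l) = clause (insert l S)"
proof (rule cons_eqI)
  have "lit_map (insert l S) v = lit_map S v + lit_map {l} v" for v
    using assms(2) by (cases l) (auto simp: lit_map_def intro: rev_image_eqI)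
  then show "lhs (cp_add (clause S) (lit_axiom l)) = lhs (clause (insert l S))"
    by (simp add: cp_add_def lhs_lit_axiom fun_eq_iff)
  have "cancellation (lit_map S v) (lit_map {l} v) = 0" for v
    using assms(2) by (cases l) (auto simp: lit_map_def cancellation_def intro: rev_image_eqI)
  moreover have "support (lit_axiom l) \<subseteq> lit_var ` insert l S"
    by (cases l) (auto simp: support_def lhs_lit_axiom lit_map_def)
  ultimately show "degree (cp_add (clause S) (lit_axiom l)) = degree (clause (insert l S))"
    using assms(1) support_clause[of S]
    by (subst degree_cp_add[where F = "lit_var ` insert l S"])
       (auto simp: degree_clause degree_lit_axiom lhs_lit_axiom)
qed

section \<open>Premises in normalized form\<close>

definition normalized :: "(int \<times> 'v lit) list \<Rightarrow> bool" where
  "normalized ts \<longleftrightarrow> distinct (map (lit_var \<circ> snd) ts) \<and> (\<forall>t\<in>set ts. 0 < fst t)"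

lemma normalized_filter: "normalized ts \<Longrightarrow> normalized (filter P ts)"
  by (auto simp: normalized_def distinct_map_filter)

lemma lhs_to_cons: "lhs (to_cons (ts, A)) v = (\<Sum>t\<leftarrow>ts. fst t * lit_map {snd t} v)"
proof -
  have "lit_coeff v = (\<lambda>t. fst t * lit_map {snd t} v)"
    by (auto simp: fun_eq_iff lit_coeff_def lit_map_def split: lit.split)
  then show ?thesis
    by (simp add: to_cons_def)
qed

lemma lhs_to_cons_notin: "v \<notin> lit_var ` snd ` set ts \<Longrightarrow> lhs (to_cons (ts, A)) v = 0"
  unfolding lhs_to_cons by (induction ts) (auto simp: lit_map_singleton_eq_0)

lemma lhs_to_cons_member:
  assumes "normalized ts" "t \<in> set ts"
  shows "lhs (to_cons (ts, A)) (lit_var (snd t)) = fst t * lit_map {snd t} (lit_var (snd t))"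
  using assms
proof (induction ts)
  case (Cons t' ts)
  then have ts: "normalized ts" and t': "lit_var (snd t') \<notin> lit_var ` snd ` set ts"
    by (auto simp: normalized_def)
  show ?case
  proof (cases "t = t'")
    case True
    then show ?thesis
      using lhs_to_cons_notin[OF t', of A] by (simp add: lhs_to_cons)
  next
    case False
    with Cons.prems have "t \<in> set ts" by simp
    moreover from this t' have "lit_var (snd t') \<noteq> lit_var (snd t)" by auto
    ultimately show ?thesis
      using Cons.IH[OF ts] by (simp add: lhs_to_cons lit_map_singleton_eq_0)
  qed
qed simp

lemma support_to_cons:
  assumes "normalized ts"
  shows "support (to_cons (ts, A)) = lit_var ` snd ` set ts"
proof
  show "support (to_cons (ts, A)) \<subseteq> lit_var ` snd ` set ts"
    using lhs_to_cons_notin[of _ ts A] by (auto simp: support_def)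
  show "lit_var ` snd ` set ts \<subseteq> support (to_cons (ts, A))"
  proof
    fix v assume "v \<in> lit_var ` snd ` set ts"
    then obtain t where t: "t \<in> set ts" "v = lit_var (snd t)" by auto
    with assms have "0 < fst t" by (simp add: normalized_def)
    with t show "v \<in> support (to_cons (ts, A))"
      using lhs_to_cons_member[OF assms t(1)] abs_lit_map_self[of "snd t"]
      by (auto simp: support_def)
  qed
qed

lemma sum_support_to_cons:
  assumes "normalized ts"
  shows "(\<Sum>v\<in>lit_var ` snd ` set ts. f (lhs (to_cons (ts, A)) v))
       = (\<Sum>t\<leftarrow>ts. f (fst t * lit_map {snd t} (lit_var (snd t))))"
proof -
  have "(\<Sum>v\<in>lit_var ` snd ` set ts. f (lhs (to_cons (ts, A)) v))
      = (\<Sum>v\<leftarrow>map (lit_var \<circ> snd) ts. f (lhs (to_cons (ts, A)) v))"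
    using assms unfolding normalized_def
    by (subst sum_list_distinct_conv_sum_set) (simp_all add: image_image)
  also have "\<dots> = (\<Sum>t\<leftarrow>ts. f (lhs (to_cons (ts, A)) (lit_var (snd t))))"
    by (simp add: comp_def)
  also have "\<dots> = (\<Sum>t\<leftarrow>ts. f (fst t * lit_map {snd t} (lit_var (snd t))))"
    using lhs_to_cons_member[OF assms] by (simp cong: map_cong)
  finally show ?thesis .
qed

lemma degree_to_cons:
  assumes "normalized ts"
  shows "degree (to_cons (ts, A)) = A"
proof -
  have "degree (to_cons (ts, A))
      = rhs (to_cons (ts, A)) + (\<Sum>v\<in>lit_var ` snd ` set ts. max 0 (- lhs (to_cons (ts, A)) v))"
    using assms by (intro degree_eq_sum) (simp_all add: support_to_cons)
  also have "(\<Sum>v\<in>lit_var ` snd ` set ts. max 0 (- lhs (to_cons (ts, A)) v)) = (\<Sum>t\<leftarrow>ts. neg_const t)"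
  proof -
    have "max 0 (- (fst t * lit_map {snd t} (lit_var (snd t)))) = neg_const t" if "t \<in> set ts" for t
      using assms that by (cases "snd t") (auto simp: normalized_def lit_map_def neg_const_def)
    then show ?thesis
      using sum_support_to_cons[OF assms, where f = "\<lambda>x. max 0 (- x)"] by (simp cong: map_cong)
  qed
  finally show ?thesis
    by (simp add: to_cons_def)
qed

lemma cons_size_to_cons:
  assumes "normalized ts"
  shows "cons_size (to_cons (ts, A)) = (\<Sum>t\<leftarrow>ts. bitsize (nat (fst t))) + bitsize (nat \<bar>A\<bar>)"
proof -
  have "cons_size (to_cons (ts, A))
      = (\<Sum>v\<in>lit_var ` snd ` set ts. bitsize (nat \<bar>lhs (to_cons (ts, A)) v\<bar>)) + bitsize (nat \<bar>A\<bar>)"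
    using support_to_cons[OF assms] degree_to_cons[OF assms] by (simp add: cons_size_def support_def)
  also have "(\<Sum>v\<in>lit_var ` snd ` set ts. bitsize (nat \<bar>lhs (to_cons (ts, A)) v\<bar>))
      = (\<Sum>t\<leftarrow>ts. bitsize (nat (fst t)))"
  proof -
    have "bitsize (nat \<bar>fst t * lit_map {snd t} (lit_var (snd t))\<bar>) = bitsize (nat (fst t))"
      if "t \<in> set ts" for t
      using assms that by (auto simp: normalized_def abs_mult abs_lit_map_self)
    then show ?thesis
      using sum_support_to_cons[OF assms, where f = "\<lambda>x. bitsize (nat \<bar>x\<bar>)"] by (simp cong: map_cong)
  qed
  finally show ?thesis .
qed

lemma cons_size_to_cons_filter_le:
  assumes "normalized ts" "0 \<le> A'" "A' \<le> A"
  shows "cons_size (to_cons (filter P ts, A')) \<le> cons_size (to_cons (ts, A))"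
proof -
  have "bitsize (nat \<bar>A'\<bar>) \<le> bitsize (nat \<bar>A\<bar>)"
    using assms(2,3) by (intro bitsize_mono) simp
  then show ?thesis
    using assms(1) sum_list_filter_le_nat[of "\<lambda>t. bitsize (nat (fst t))" P ts]
    by (simp add: cons_size_to_cons normalized_filter)
qed

lemma length_le_cons_size_to_cons:
  assumes "normalized ts"
  shows "length ts + 1 \<le> cons_size (to_cons (ts, A))"
proof -
  have "length ts \<le> (\<Sum>t\<leftarrow>ts. bitsize (nat (fst t)))"
    using sum_list_mono[of ts "\<lambda>_. 1" "\<lambda>t. bitsize (nat (fst t))"] bitsize_ge_1
    by (simp add: sum_list_triv)
  then show ?thesis
    using bitsize_ge_1[of "nat \<bar>A\<bar>"] by (simp add: cons_size_to_cons[OF assms])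
qed

lemma bitsize_coeff_le_cons_size_to_cons:
  assumes "normalized ts" "t \<in> set ts"
  shows "bitsize (nat (fst t)) + 1 \<le> cons_size (to_cons (ts, A))"
  using member_le_sum_list[of "bitsize (nat (fst t))" "map (\<lambda>t. bitsize (nat (fst t))) ts"] assms(2)
    bitsize_ge_1[of "nat \<bar>A\<bar>"]
  by (simp add: cons_size_to_cons[OF assms(1)])

lemma cp_add_to_cons_axiom:
  assumes "t \<in> set ts"
  shows "cp_add (to_cons (ts, A)) (cp_mult (fst t) (lit_axiom (negate (snd t))))
       = to_cons (remove1 t ts, A - fst t)"
proof -
  obtain c l where t: "t = (c, l)" by (cases t)
  show ?thesis
    using sum_list_map_remove1[OF assms, of neg_const] sum_list_map_remove1[OF assms, of "lit_coeff _"]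
    by (cases l)
       (auto simp: t to_cons_def cp_add_def cp_mult_def lit_axiom_def fun_eq_iff lit_coeff_def neg_const_def)
qed

lemma sat_to_cons_clause:
  assumes ts: "normalized ts"
  shows "cp_sat (to_cons (ts, 1)) = clause (snd ` set ts)"
proof (rule cons_eqI)
  have deg: "degree (to_cons (ts, 1)) = 1"
    using degree_to_cons[OF ts] .
  show "lhs (cp_sat (to_cons (ts, 1))) = lhs (clause (snd ` set ts))"
  proof
    fix v
    show "lhs (cp_sat (to_cons (ts, 1))) v = lhs (clause (snd ` set ts)) v"
    proof (cases "v \<in> lit_var ` snd ` set ts")
      case True
      then obtain t where t: "t \<in> set ts" "v = lit_var (snd t)" by auto
      have unique: "l = snd t" if "l \<in> snd ` set ts" "lit_var l = v" for l
        using ts that t unfolding normalized_def distinct_map inj_on_def by fastforce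
      have "Pos v \<in> snd ` set ts \<longleftrightarrow> Pos v = snd t" "Neg v \<in> snd ` set ts \<longleftrightarrow> Neg v = snd t"
        using unique[of "Pos v"] unique[of "Neg v"] t by force+
      then have "lit_map (snd ` set ts) v = lit_map {snd t} v"
        by (simp add: lit_map_def)
      moreover have "0 < fst t"
        using ts t by (simp add: normalized_def)
      ultimately show ?thesis
        using lhs_to_cons_member[OF ts t(1), of 1] t(2)
        by (cases "snd t") (simp_all add: lhs_cp_sat deg lit_map_def sgn_mult)
    next
      case False
      then have "lit_map (snd ` set ts) v = 0"
        by (force simp: lit_map_def)
      with False show ?thesis
        by (simp add: lhs_cp_sat lhs_to_cons_notin)
    qed
  qed
  have "finite (support (to_cons (ts, 1)))"
    by (simp add: support_to_cons[OF ts])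
  then show "degree (cp_sat (to_cons (ts, 1))) = degree (clause (snd ` set ts))"
    by (simp add: degree_cp_sat deg degree_clause)
qed

section \<open>Derivations with few lines of bounded size\<close>

definition derivation_from :: "'v pbc set \<Rightarrow> 'v cons list \<Rightarrow> 'v cons list \<Rightarrow> bool" where
  "derivation_from \<Gamma> H \<pi> \<longleftrightarrow> (\<forall>i<length \<pi>. cp_step \<Gamma> (H @ take i \<pi>) (\<pi> ! i))"

lemma cp_step_mono: "set ctx \<subseteq> set ctx' \<Longrightarrow> cp_step \<Gamma> ctx c \<Longrightarrow> cp_step \<Gamma> ctx' c"
  unfolding cp_step_def by blast

lemma derivation_from_mono:
  assumes "set H \<subseteq> set H'" "derivation_from \<Gamma> H \<pi>"
  shows "derivation_from \<Gamma> H' \<pi>"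
  unfolding derivation_from_def
proof (intro allI impI)
  fix i assume "i < length \<pi>"
  with assms(2) have "cp_step \<Gamma> (H @ take i \<pi>) (\<pi> ! i)"
    by (simp add: derivation_from_def)
  then show "cp_step \<Gamma> (H' @ take i \<pi>) (\<pi> ! i)"
    by (rule cp_step_mono[rotated]) (use assms(1) in auto)
qed

lemma derivation_from_append:
  "derivation_from \<Gamma> H (\<pi> @ \<pi>') \<longleftrightarrow> derivation_from \<Gamma> H \<pi> \<and> derivation_from \<Gamma> (H @ \<pi>) \<pi>'"
proof -
  have split: "(\<forall>i<m + k. P i) \<longleftrightarrow> (\<forall>i<m. P i) \<and> (\<forall>j<k. P (m + j))" for P and m k :: nat
  proof
    assume *: "(\<forall>i<m. P i) \<and> (\<forall>j<k. P (m + j))"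
    show "\<forall>i<m + k. P i"
    proof (intro allI impI)
      fix i assume "i < m + k"
      then show "P i"
        using * by (cases "i < m") (auto dest: spec[of _ "i - m"])
    qed
  qed simp
  show ?thesis
    unfolding derivation_from_def by (simp add: split nth_append)
qed

lemma derivation_from_single: "derivation_from \<Gamma> H [c] \<longleftrightarrow> cp_step \<Gamma> H c"
  by (simp add: derivation_from_def)

definition derivable :: "'v pbc set \<Rightarrow> 'v cons list \<Rightarrow> nat \<Rightarrow> nat \<Rightarrow> 'v cons set \<Rightarrow> bool" where
  "derivable \<Gamma> H b N C \<longleftrightarrow>
     (\<exists>\<pi>. derivation_from \<Gamma> H \<pi> \<and> C \<subseteq> set H \<union> set \<pi> \<and> length \<pi> \<le> N \<and> (\<forall>c\<in>set \<pi>. cons_size c \<le> b))"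

lemma derivable_hyps: "C \<subseteq> set H \<Longrightarrow> derivable \<Gamma> H b N C"
  unfolding derivable_def by (rule exI[of _ "[]"]) (simp add: derivation_from_def)

lemma derivable_mono: "derivable \<Gamma> H b N C \<Longrightarrow> N \<le> N' \<Longrightarrow> derivable \<Gamma> H b N' C"
  unfolding derivable_def by fastforce

lemma derivable_subset: "derivable \<Gamma> H b N C \<Longrightarrow> D \<subseteq> C \<Longrightarrow> derivable \<Gamma> H b N D"
  unfolding derivable_def by blast

lemma derivable_compose:
  assumes "derivable \<Gamma> H b N1 C" "set H' \<subseteq> set H \<union> C" "derivable \<Gamma> H' b N2 D" "N1 + N2 \<le> N"
  shows "derivable \<Gamma> H b N (C \<union> D)"
proof -
  obtain \<pi> where \<pi>: "derivation_from \<Gamma> H \<pi>" "C \<subseteq> set H \<union> set \<pi>" "length \<pi> \<le> N1"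
      "\<forall>c\<in>set \<pi>. cons_size c \<le> b"
    using assms(1) by (auto simp: derivable_def)
  obtain \<pi>' where \<pi>': "derivation_from \<Gamma> H' \<pi>'" "D \<subseteq> set H' \<union> set \<pi>'" "length \<pi>' \<le> N2"
      "\<forall>c\<in>set \<pi>'. cons_size c \<le> b"
    using assms(3) by (auto simp: derivable_def)
  have "set H' \<subseteq> set (H @ \<pi>)"
    using assms(2) \<pi>(2) by auto
  then have "derivation_from \<Gamma> H (\<pi> @ \<pi>')"
    using \<pi>(1) derivation_from_mono[OF _ \<pi>'(1)] by (simp add: derivation_from_append)
  moreover have "C \<union> D \<subseteq> set H \<union> set (\<pi> @ \<pi>')"
    using \<pi>(2) \<pi>'(2) \<open>set H' \<subseteq> set (H @ \<pi>)\<close> by auto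
  ultimately show ?thesis
    unfolding derivable_def using \<pi> \<pi>' assms(4) by (intro exI[of _ "\<pi> @ \<pi>'"]) auto
qed

lemma derivable_union:
  "derivable \<Gamma> H b N1 C \<Longrightarrow> derivable \<Gamma> H b N2 D \<Longrightarrow> N1 + N2 \<le> N \<Longrightarrow> derivable \<Gamma> H b N (C \<union> D)"
  by (erule derivable_compose) auto

lemma derivable_cut:
  "derivable \<Gamma> H b N1 C \<Longrightarrow> set H' \<subseteq> set H \<union> C \<Longrightarrow> derivable \<Gamma> H' b N2 D \<Longrightarrow> N1 + N2 \<le> N
   \<Longrightarrow> derivable \<Gamma> H b N D"
  by (drule (3) derivable_compose) (erule derivable_subset, simp)

lemma derivable_step:
  assumes "derivable \<Gamma> H b N C" "\<And>ctx. C \<subseteq> set ctx \<Longrightarrow> cp_step \<Gamma> ctx c" "cons_size c \<le> b" "N + 1 \<le> N'"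
  shows "derivable \<Gamma> H b N' {c}"
proof -
  obtain \<pi> where \<pi>: "derivation_from \<Gamma> H \<pi>" "C \<subseteq> set H \<union> set \<pi>" "length \<pi> \<le> N"
      "\<forall>c\<in>set \<pi>. cons_size c \<le> b"
    using assms(1) by (auto simp: derivable_def)
  have "cp_step \<Gamma> (H @ \<pi>) c"
    using \<pi>(2) by (intro assms(2)) auto
  then have "derivation_from \<Gamma> H (\<pi> @ [c])"
    using \<pi>(1) by (simp add: derivation_from_append derivation_from_single)
  then show ?thesis
    unfolding derivable_def using \<pi> assms(3,4) by (intro exI[of _ "\<pi> @ [c]"]) auto
qed

lemma derivable_premise:
  "p \<in> \<Gamma> \<Longrightarrow> cons_size (to_cons p) \<le> b \<Longrightarrow> 1 \<le> N \<Longrightarrow> derivable \<Gamma> H b N {to_cons p}"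
  by (rule derivable_step[OF derivable_hyps[of "{}"]]) (auto simp: cp_step_def)

lemma derivable_axiom: "2 \<le> b \<Longrightarrow> 1 \<le> N \<Longrightarrow> derivable \<Gamma> H b N {lit_axiom l}"
  using cons_size_lit_axiom_le[of l]
  by (intro derivable_step[OF derivable_hyps[of "{}"]]) (auto simp: cp_step_def)

lemma derivable_add:
  assumes "derivable \<Gamma> H b N1 {c1}" "derivable \<Gamma> H b N2 {c2}" "cons_size (cp_add c1 c2) \<le> b"
    "N1 + N2 + 1 \<le> N"
  shows "derivable \<Gamma> H b N {cp_add c1 c2}"
  by (rule derivable_step[OF derivable_union[OF assms(1,2) order_refl] _ assms(3,4)])
     (auto simp: cp_step_def)

lemma derivable_mult:
  "derivable \<Gamma> H b N1 {c} \<Longrightarrow> 0 < k \<Longrightarrow> cons_size (cp_mult k c) \<le> b \<Longrightarrow> N1 + 1 \<le> N \<Longrightarrow>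
   derivable \<Gamma> H b N {cp_mult k c}"
  by (erule derivable_step) (auto simp: cp_step_def)

lemma derivable_sat:
  "derivable \<Gamma> H b N1 {c} \<Longrightarrow> cons_size (cp_sat c) \<le> b \<Longrightarrow> N1 + 1 \<le> N \<Longrightarrow>
   derivable \<Gamma> H b N {cp_sat c}"
  by (erule derivable_step) (auto simp: cp_step_def)

lemma derivable_imp_derivation:
  assumes "derivable \<Gamma> [] b N {c}"
  shows "\<exists>\<pi>. cp_derivation \<Gamma> \<pi> \<and> \<pi> \<noteq> [] \<and> last \<pi> = c \<and> deriv_size \<pi> \<le> b * N"
proof -
  obtain \<pi> where \<pi>: "derivation_from \<Gamma> [] \<pi>" "c \<in> set \<pi>" "length \<pi> \<le> N"
      "\<forall>c\<in>set \<pi>. cons_size c \<le> b"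
    using assms by (auto simp: derivable_def)
  obtain j where j: "j < length \<pi>" "\<pi> ! j = c"
    using \<pi>(2) by (auto simp: in_set_conv_nth)
  let ?\<pi> = "take (Suc j) \<pi>"
  have "derivation_from \<Gamma> [] ?\<pi>"
    using \<pi>(1) derivation_from_append[of \<Gamma> "[]" ?\<pi> "drop (Suc j) \<pi>"] by simp
  moreover have "last ?\<pi> = c"
    using j by (simp add: take_Suc_conv_app_nth)
  moreover have "deriv_size ?\<pi> \<le> b * N"
  proof -
    have "deriv_size ?\<pi> \<le> length ?\<pi> * b"
      using \<pi>(4) sum_list_mono[of ?\<pi> cons_size "\<lambda>_. b"]
      by (auto simp: deriv_size_def sum_list_triv dest: in_set_takeD)
    also have "\<dots> \<le> N * b"
      using \<pi>(3) by (intro mult_le_mono1) simp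
    finally show ?thesis
      by (simp add: mult.commute)
  qed
  ultimately show ?thesis
    using j(1) by (intro exI[of _ ?\<pi>]) (auto simp: cp_derivation_def derivation_from_def)
qed

lemma derivable_weakened_premise:
  assumes p: "(ts, A) \<in> \<Gamma>" and ts: "normalized ts" and size: "cons_size (to_cons (ts, A)) \<le> b"
  shows "set D \<subseteq> set ts \<Longrightarrow> distinct D \<Longrightarrow> 1 \<le> A - (\<Sum>t\<leftarrow>D. fst t) \<Longrightarrow>
    derivable \<Gamma> H b (1 + 3 * length D) {to_cons (filter (\<lambda>t. t \<notin> set D) ts, A - (\<Sum>t\<leftarrow>D. fst t))}"
proof (induction D)
  case Nil
  then show ?case
    using derivable_premise[OF p size] by simp
next
  case (Cons d D)
  let ?ts = "filter (\<lambda>t. t \<notin> set D) ts" and ?A = "A - (\<Sum>t\<leftarrow>D. fst t)"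
  have d: "d \<in> set ?ts" "0 < fst d"
    using Cons.prems ts by (auto simp: normalized_def)
  have D_nonneg: "0 \<le> (\<Sum>t\<leftarrow>D. fst t)"
    using Cons.prems ts by (intro sum_list_nonneg) (fastforce simp: normalized_def)
  have IH: "derivable \<Gamma> H b (1 + 3 * length D) {to_cons (?ts, ?A)}"
    using Cons d by simp
  have "distinct ts"
    using ts by (simp add: normalized_def distinct_map)
  then have "remove1 d ?ts = filter (\<lambda>t. t \<notin> set (d # D)) ts"
    by (auto simp: distinct_remove1_removeAll removeAll_filter_not_eq filter_filter intro: filter_cong)
  then have step: "cp_add (to_cons (?ts, ?A)) (cp_mult (fst d) (lit_axiom (negate (snd d))))
      = to_cons (filter (\<lambda>t. t \<notin> set (d # D)) ts, A - (\<Sum>t\<leftarrow>d # D. fst t))"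
    using cp_add_to_cons_axiom[OF d(1)] by (simp add: algebra_simps)
  have "2 \<le> b" "bitsize (nat (fst d)) + 1 \<le> b"
    using bitsize_coeff_le_cons_size_to_cons[OF ts, of d A] bitsize_ge_1[of "nat (fst d)"] Cons.prems size
    by auto
  then have mult: "derivable \<Gamma> H b 2 {cp_mult (fst d) (lit_axiom (negate (snd d)))}"
    using cons_size_mult_axiom_le[OF d(2), of "negate (snd d)"] d(2)
    by (intro derivable_mult[OF derivable_axiom]) auto
  have "cons_size (to_cons (filter (\<lambda>t. t \<notin> set (d # D)) ts, A - (\<Sum>t\<leftarrow>d # D. fst t))) \<le> b"
    using Cons.prems D_nonneg d(2) by (intro order_trans[OF cons_size_to_cons_filter_le[OF ts] size]) auto
  then have "derivable \<Gamma> H b (1 + 3 * length (d # D))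
      {cp_add (to_cons (?ts, ?A)) (cp_mult (fst d) (lit_axiom (negate (snd d))))}"
    by (intro derivable_add[OF IH mult]) (simp_all only: step, simp)
  then show ?case
    by (simp only: step)
qed

lemma derivable_premise_clause:
  assumes p: "(ts, A) \<in> \<Gamma>" and ts: "normalized ts" and size: "cons_size (to_cons (ts, A)) \<le> b"
    and S: "S \<subseteq> snd ` set ts" and deg: "A - (\<Sum>t\<leftarrow>filter (\<lambda>t. snd t \<notin> S) ts. fst t) = 1"
    and N: "2 + 3 * length (filter (\<lambda>t. snd t \<notin> S) ts) \<le> N"
  shows "derivable \<Gamma> H b N {clause S}"
proof -
  let ?D = "filter (\<lambda>t. snd t \<notin> S) ts" and ?kept = "filter (\<lambda>t. snd t \<in> S) ts"
  have "distinct ts"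
    using ts by (simp add: normalized_def distinct_map)
  have "filter (\<lambda>t. t \<notin> set ?D) ts = ?kept"
    by (rule filter_cong) auto
  then have kept: "derivable \<Gamma> H b (1 + 3 * length ?D) {to_cons (?kept, 1)}"
    using derivable_weakened_premise[OF p ts size, of ?D] \<open>distinct ts\<close> deg by simp
  have sat: "cp_sat (to_cons (?kept, 1)) = clause S"
  proof -
    have "snd ` set ?kept = S"
      using S by auto
    then show ?thesis
      using sat_to_cons_clause[OF normalized_filter[OF ts]] by simp
  qed
  have "cons_size (clause S) \<le> b"
  proof -
    have "card S \<le> length ts"
      using card_mono[OF _ S] card_image_le[of "set ts" snd] card_length[of ts] by simp
    then show ?thesis
      using cons_size_clause_le[of S] finite_subset[OF S] length_le_cons_size_to_cons[OF ts, of A] size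
      by simp
  qed
  with kept N have "derivable \<Gamma> H b N {cp_sat (to_cons (?kept, 1))}"
    by (intro derivable_sat) (simp_all add: sat)
  then show ?thesis
    by (simp only: sat)
qed

lemma derivable_resolve:
  assumes "derivable \<Gamma> H b N1 {clause S}" "derivable \<Gamma> H b N2 {clause T}" "resolvent x S T R"
    "finite S" "finite T" "2 * card R + 1 \<le> b" "N1 + N2 + 2 \<le> N"
  shows "derivable \<Gamma> H b N {clause R}"
proof -
  have "derivable \<Gamma> H b (N1 + N2 + 1) {cp_add (clause S) (clause T)}"
    using cons_size_add_resolvent_le[OF assms(3-5)] assms(6) by (intro derivable_add[OF assms(1,2)]) auto
  moreover have "finite R"
    using assms(3-5) by (simp add: resolvent_def)
  then have "cons_size (clause R) \<le> b"
    using cons_size_clause_le[of R] assms(6) by simp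
  ultimately have "derivable \<Gamma> H b N {cp_sat (cp_add (clause S) (clause T))}"
    using assms(7) by (intro derivable_sat) (simp_all add: sat_add_resolvent[OF assms(3-5)])
  then show ?thesis
    by (simp only: sat_add_resolvent[OF assms(3-5)])
qed

lemma derivable_clause_insert:
  assumes "derivable \<Gamma> H b N1 {clause S}" "finite S" "lit_var l \<notin> lit_var ` S" "insert l S = S'"
    "card S + 2 \<le> b" "N1 + 2 \<le> N"
  shows "derivable \<Gamma> H b N {clause S'}"
proof -
  have "cons_size (clause (insert l S)) \<le> b"
    using cons_size_clause_le[of "insert l S"] assms(2,5) by (simp add: card_insert_if split: if_splits)
  then have "derivable \<Gamma> H b N {cp_add (clause S) (lit_axiom l)}"
    using assms(5,6) by (intro derivable_add[OF assms(1) derivable_axiom[of b 1]])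
      (simp_all add: cp_add_clause_axiom[OF assms(2,3)])
  then show ?thesis
    by (simp only: cp_add_clause_axiom[OF assms(2,3)] assms(4))
qed

section \<open>Transitivity of the lexicographic order\<close>

lemma spec_a1_neg: "2 \<le> n \<Longrightarrow> ([(1, Neg (a 1)), (1, Pos (u 1)), (1, Neg (v 1))], 1) \<in> spec n u v a d"
  by (simp add: spec_def)

lemma spec_a1_pos: "2 \<le> n \<Longrightarrow> ([(2, Pos (a 1)), (1, Neg (u 1)), (1, Pos (v 1))], 2) \<in> spec n u v a d"
  by (simp add: spec_def)

lemma spec_a_succ_neg:
  "1 \<le> i \<Longrightarrow> Suc i < n \<Longrightarrow>
   ([(3, Neg (a (Suc i))), (2, Pos (a i)), (1, Pos (u (Suc i))), (1, Neg (v (Suc i)))], 3) \<in> spec n u v a d"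
  unfolding spec_def by auto

lemma spec_a_succ_pos:
  "1 \<le> i \<Longrightarrow> Suc i < n \<Longrightarrow>
   ([(2, Pos (a (Suc i))), (2, Neg (a i)), (1, Neg (u (Suc i))), (1, Pos (v (Suc i)))], 2) \<in> spec n u v a d"
  unfolding spec_def by auto

lemma spec_d1_neg: "([(1, Neg (d 1)), (1, Pos (v 1)), (1, Neg (u 1))], 1) \<in> spec n u v a d"
  by (simp add: spec_def)

lemma spec_d1_pos: "([(2, Pos (d 1)), (1, Neg (v 1)), (1, Pos (u 1))], 2) \<in> spec n u v a d"
  by (simp add: spec_def)

lemma spec_d_succ_neg:
  "1 \<le> i \<Longrightarrow> i < n \<Longrightarrow>
   ([(4, Neg (d (Suc i))), (3, Pos (d i)), (1, Neg (a i)), (1, Pos (v (Suc i))), (1, Neg (u (Suc i)))], 4)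
     \<in> spec n u v a d"
  unfolding spec_def by auto

lemma spec_d_succ_pos:
  "1 \<le> i \<Longrightarrow> i < n \<Longrightarrow>
   ([(4, Pos (d (Suc i))), (3, Neg (d i)), (1, Pos (a i)), (1, Neg (v (Suc i))), (1, Pos (u (Suc i)))], 3)
     \<in> spec n u v a d"
  unfolding spec_def by auto

lemma premise_xy: "p \<in> spec n X Y VA VD \<Longrightarrow> p \<in> trans_premises n"
  and premise_yz: "p \<in> spec n Y Z VB VE \<Longrightarrow> p \<in> trans_premises n"
  and premise_xz: "p \<in> spec n X Z VC VF \<Longrightarrow> p \<in> trans_premises n"
  and premise_unit_d: "unit_pbc (VD n) \<in> trans_premises n"
  and premise_unit_e: "unit_pbc (VE n) \<in> trans_premises n"
  by (simp_all add: trans_premises_def)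

definition implies_f :: "nat \<Rightarrow> var cons" where
  "implies_f i = clause {Neg (VD i), Neg (VE i), Pos (VF i)}"

definition implies_a :: "nat \<Rightarrow> var cons" where
  "implies_a i = clause {Neg (VD i), Neg (VE i), Neg (VC i), Pos (VA i)}"

definition implies_b :: "nat \<Rightarrow> var cons" where
  "implies_b i = clause {Neg (VD i), Neg (VE i), Neg (VC i), Pos (VB i)}"

lemma implies_f_1: "derivable (trans_premises n) H 11 20 {implies_f 1}"
proof -
  let ?derivable = "derivable (trans_premises n) H 11"
  have f_x: "?derivable 5 {clause {Pos (VF 1), Pos (X 1)}}"
    and f_nz: "?derivable 5 {clause {Pos (VF 1), Neg (Z 1)}}"
    by (rule derivable_premise_clause[OF premise_xz[OF spec_d1_pos]];
        simp add: normalized_def cons_size_to_cons)+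
  have d: "?derivable 2 {clause {Neg (VD 1), Pos (Y 1), Neg (X 1)}}"
    by (rule derivable_premise_clause[OF premise_xy[OF spec_d1_neg]])
       (simp_all add: normalized_def cons_size_to_cons)
  have e: "?derivable 2 {clause {Neg (VE 1), Pos (Z 1), Neg (Y 1)}}"
    by (rule derivable_premise_clause[OF premise_yz[OF spec_d1_neg]])
       (simp_all add: normalized_def cons_size_to_cons)
  have f_y: "?derivable 9 {clause {Pos (VF 1), Neg (VD 1), Pos (Y 1)}}"
    by (rule derivable_resolve[OF f_x d, where x = "X 1"]) (auto simp: resolvent_def consistent_def)
  have f_z: "?derivable 13 {clause {Pos (VF 1), Neg (VD 1), Neg (VE 1), Pos (Z 1)}}"
    by (rule derivable_resolve[OF f_y e, where x = "Y 1"]) (auto simp: resolvent_def consistent_def)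
  show ?thesis
    unfolding implies_f_def
    by (rule derivable_resolve[OF f_z f_nz, where x = "Z 1"])
       (auto simp: resolvent_def consistent_def)
qed

lemma implies_a_1:
  assumes "2 \<le> n"
  shows "derivable (trans_premises n) H 11 22 {implies_a 1}"
proof -
  let ?derivable = "derivable (trans_premises n) H 11"
  have a_y: "?derivable 5 {clause {Pos (VA 1), Pos (Y 1)}}"
    and a_nx: "?derivable 5 {clause {Pos (VA 1), Neg (X 1)}}"
    by (rule derivable_premise_clause[OF premise_xy[OF spec_a1_pos[OF assms]]];
        simp add: normalized_def cons_size_to_cons)+
  have c: "?derivable 2 {clause {Neg (VC 1), Pos (X 1), Neg (Z 1)}}"
    by (rule derivable_premise_clause[OF premise_xz[OF spec_a1_neg[OF assms]]])
       (simp_all add: normalized_def cons_size_to_cons)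
  have e: "?derivable 2 {clause {Neg (VE 1), Pos (Z 1), Neg (Y 1)}}"
    by (rule derivable_premise_clause[OF premise_yz[OF spec_d1_neg]])
       (simp_all add: normalized_def cons_size_to_cons)
  have a_z: "?derivable 9 {clause {Pos (VA 1), Neg (VE 1), Pos (Z 1)}}"
    by (rule derivable_resolve[OF a_y e, where x = "Y 1"]) (auto simp: resolvent_def consistent_def)
  have a_x: "?derivable 13 {clause {Pos (VA 1), Neg (VE 1), Neg (VC 1), Pos (X 1)}}"
    by (rule derivable_resolve[OF a_z c, where x = "Z 1"]) (auto simp: resolvent_def consistent_def)
  have "?derivable 20 {clause {Neg (VE 1), Neg (VC 1), Pos (VA 1)}}"
    by (rule derivable_resolve[OF a_x a_nx, where x = "X 1"])
       (auto simp: resolvent_def consistent_def)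
  then show ?thesis
    unfolding implies_a_def by (rule derivable_clause_insert[where l = "Neg (VD 1)"]) auto
qed

lemma implies_b_1:
  assumes "2 \<le> n"
  shows "derivable (trans_premises n) H 11 22 {implies_b 1}"
proof -
  let ?derivable = "derivable (trans_premises n) H 11"
  have b_z: "?derivable 5 {clause {Pos (VB 1), Pos (Z 1)}}"
    and b_ny: "?derivable 5 {clause {Pos (VB 1), Neg (Y 1)}}"
    by (rule derivable_premise_clause[OF premise_yz[OF spec_a1_pos[OF assms]]];
        simp add: normalized_def cons_size_to_cons)+
  have c: "?derivable 2 {clause {Neg (VC 1), Pos (X 1), Neg (Z 1)}}"
    by (rule derivable_premise_clause[OF premise_xz[OF spec_a1_neg[OF assms]]])
       (simp_all add: normalized_def cons_size_to_cons)
  have d: "?derivable 2 {clause {Neg (VD 1), Pos (Y 1), Neg (X 1)}}"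
    by (rule derivable_premise_clause[OF premise_xy[OF spec_d1_neg]])
       (simp_all add: normalized_def cons_size_to_cons)
  have b_x: "?derivable 9 {clause {Pos (VB 1), Neg (VC 1), Pos (X 1)}}"
    by (rule derivable_resolve[OF b_z c, where x = "Z 1"]) (auto simp: resolvent_def consistent_def)
  have b_y: "?derivable 13 {clause {Pos (VB 1), Neg (VC 1), Neg (VD 1), Pos (Y 1)}}"
    by (rule derivable_resolve[OF b_x d, where x = "X 1"]) (auto simp: resolvent_def consistent_def)
  have "?derivable 20 {clause {Neg (VD 1), Neg (VC 1), Pos (VB 1)}}"
    by (rule derivable_resolve[OF b_y b_ny, where x = "Y 1"])
       (auto simp: resolvent_def consistent_def)
  then show ?thesis
    unfolding implies_b_def by (rule derivable_clause_insert[where l = "Neg (VE 1)"]) auto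
qed

context
  fixes n i :: nat
  assumes i: "1 \<le> i" "i < n"
begin

abbreviation step_derivable :: "nat \<Rightarrow> var cons set \<Rightarrow> bool" where
  "step_derivable \<equiv> derivable (trans_premises n) [implies_f i, implies_a i, implies_b i] 11"

lemma step_hyp_f: "step_derivable 0 {clause {Neg (VD i), Neg (VE i), Pos (VF i)}}"
  and step_hyp_a: "step_derivable 0 {clause {Neg (VD i), Neg (VE i), Neg (VC i), Pos (VA i)}}"
  and step_hyp_b: "step_derivable 0 {clause {Neg (VD i), Neg (VE i), Neg (VC i), Pos (VB i)}}"
  by (simp_all add: derivable_hyps implies_f_def implies_a_def implies_b_def)

lemma step_d_mono: "step_derivable 11 {clause {Neg (VD (Suc i)), Pos (VD i)}}"
  and step_e_mono: "step_derivable 11 {clause {Neg (VE (Suc i)), Pos (VE i)}}"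
  by (rule derivable_premise_clause[OF premise_xy[OF spec_d_succ_neg[OF i]]]
      derivable_premise_clause[OF premise_yz[OF spec_d_succ_neg[OF i]]];
      simp add: normalized_def cons_size_to_cons)+

lemma step_next_le_xy: "step_derivable 5
    {clause {Neg (VD (Suc i)), Neg (VA i), Pos (Y (Suc i)), Neg (X (Suc i))}}"
  and step_next_le_yz: "step_derivable 5
      {clause {Neg (VE (Suc i)), Neg (VB i), Pos (Z (Suc i)), Neg (Y (Suc i))}}"
  by (rule derivable_premise_clause[OF premise_xy[OF spec_d_succ_neg[OF i]]]
      derivable_premise_clause[OF premise_yz[OF spec_d_succ_neg[OF i]]];
      simp add: normalized_def cons_size_to_cons)+

lemma step_lifted_f: "step_derivable 26 {clause {Neg (VD (Suc i)), Neg (VE (Suc i)), Pos (VF i)}}"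
  and step_lifted_a: "step_derivable 26
      {clause {Neg (VD (Suc i)), Neg (VE (Suc i)), Neg (VC i), Pos (VA i)}}"
  and step_lifted_b: "step_derivable 26
      {clause {Neg (VD (Suc i)), Neg (VE (Suc i)), Neg (VC i), Pos (VB i)}}"
proof -
  have f: "step_derivable 13 {clause {Neg (VD (Suc i)), Neg (VE i), Pos (VF i)}}"
    and a: "step_derivable 13 {clause {Neg (VD (Suc i)), Neg (VE i), Neg (VC i), Pos (VA i)}}"
    and b: "step_derivable 13 {clause {Neg (VD (Suc i)), Neg (VE i), Neg (VC i), Pos (VB i)}}"
    by (rule derivable_resolve[OF step_d_mono step_hyp_f, where x = "VD i"]
        derivable_resolve[OF step_d_mono step_hyp_a, where x = "VD i"]
        derivable_resolve[OF step_d_mono step_hyp_b, where x = "VD i"];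
        auto simp: resolvent_def consistent_def)+
  show "step_derivable 26 {clause {Neg (VD (Suc i)), Neg (VE (Suc i)), Pos (VF i)}}"
    "step_derivable 26 {clause {Neg (VD (Suc i)), Neg (VE (Suc i)), Neg (VC i), Pos (VA i)}}"
    "step_derivable 26 {clause {Neg (VD (Suc i)), Neg (VE (Suc i)), Neg (VC i), Pos (VB i)}}"
    by (rule derivable_resolve[OF step_e_mono f, where x = "VE i"]
        derivable_resolve[OF step_e_mono a, where x = "VE i"]
        derivable_resolve[OF step_e_mono b, where x = "VE i"];
        auto simp: resolvent_def consistent_def)+
qed

lemma step_f_fail_c: "step_derivable 8 {clause {Pos (VF (Suc i)), Neg (VF i), Pos (VC i)}}"
  and step_f_fail_not_z: "step_derivable 8 {clause {Pos (VF (Suc i)), Neg (VF i), Neg (Z (Suc i))}}"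
  and step_f_fail_x: "step_derivable 8 {clause {Pos (VF (Suc i)), Neg (VF i), Pos (X (Suc i))}}"
  by (rule derivable_premise_clause[OF premise_xz[OF spec_d_succ_pos[OF i]]];
      simp add: normalized_def cons_size_to_cons)+

(* If f_i holds but f_(i+1) fails, then c_i, x_(i+1) and not z_(i+1) (the step_f_fail facts);
   by the invariant also a_i and b_i, so x_(i+1) --> y_(i+1) --> z_(i+1) (step_next_le), a
   contradiction.  Each fact or_L below is the clause  not d_(i+1) | not e_(i+1) | f_(i+1) | L. *)
lemma step_implies_f: "step_derivable 220 {implies_f (Suc i)}"
proof -
  have or_c: "step_derivable 36
      {clause {Neg (VD (Suc i)), Neg (VE (Suc i)), Pos (VF (Suc i)), Pos (VC i)}}"
    by (rule derivable_resolve[OF step_lifted_f step_f_fail_c, where x = "VF i"])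
       (auto simp: resolvent_def consistent_def)
  have or_a: "step_derivable 64
      {clause {Neg (VD (Suc i)), Neg (VE (Suc i)), Pos (VF (Suc i)), Pos (VA i)}}"
    by (rule derivable_resolve[OF or_c step_lifted_a, where x = "VC i"])
       (auto simp: resolvent_def consistent_def)
  have or_b: "step_derivable 64
      {clause {Neg (VD (Suc i)), Neg (VE (Suc i)), Pos (VF (Suc i)), Pos (VB i)}}"
    by (rule derivable_resolve[OF or_c step_lifted_b, where x = "VC i"])
       (auto simp: resolvent_def consistent_def)
  have or_x: "step_derivable 36
      {clause {Neg (VD (Suc i)), Neg (VE (Suc i)), Pos (VF (Suc i)), Pos (X (Suc i))}}"
    by (rule derivable_resolve[OF step_lifted_f step_f_fail_x, where x = "VF i"])
       (auto simp: resolvent_def consistent_def)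
  have or_not_z: "step_derivable 36
      {clause {Neg (VD (Suc i)), Neg (VE (Suc i)), Pos (VF (Suc i)), Neg (Z (Suc i))}}"
    by (rule derivable_resolve[OF step_lifted_f step_f_fail_not_z, where x = "VF i"])
       (auto simp: resolvent_def consistent_def)
  have or_y_not_x: "step_derivable 71
      {clause {Neg (VD (Suc i)), Neg (VE (Suc i)), Pos (VF (Suc i)), Pos (Y (Suc i)), Neg (X (Suc i))}}"
    by (rule derivable_resolve[OF or_a step_next_le_xy, where x = "VA i"])
       (auto simp: resolvent_def consistent_def)
  have or_y: "step_derivable 109
      {clause {Neg (VD (Suc i)), Neg (VE (Suc i)), Pos (VF (Suc i)), Pos (Y (Suc i))}}"
    by (rule derivable_resolve[OF or_x or_y_not_x, where x = "X (Suc i)"])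
       (auto simp: resolvent_def consistent_def)
  have or_z_not_y: "step_derivable 71
      {clause {Neg (VD (Suc i)), Neg (VE (Suc i)), Pos (VF (Suc i)), Pos (Z (Suc i)), Neg (Y (Suc i))}}"
    by (rule derivable_resolve[OF or_b step_next_le_yz, where x = "VB i"])
       (auto simp: resolvent_def consistent_def)
  have or_z: "step_derivable 182
      {clause {Neg (VD (Suc i)), Neg (VE (Suc i)), Pos (VF (Suc i)), Pos (Z (Suc i))}}"
    by (rule derivable_resolve[OF or_y or_z_not_y, where x = "Y (Suc i)"])
       (auto simp: resolvent_def consistent_def)
  show ?thesis
    unfolding implies_f_def[of "Suc i"]
    by (rule derivable_resolve[OF or_z or_not_z, where x = "Z (Suc i)"])
       (auto simp: resolvent_def consistent_def)
qed

lemma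
  assumes "Suc i < n"
  shows step_c_mono: "step_derivable 8 {clause {Neg (VC (Suc i)), Pos (VC i)}}"
    and step_c_next_ge: "step_derivable 5
        {clause {Neg (VC (Suc i)), Pos (X (Suc i)), Neg (Z (Suc i))}}"
  by (rule derivable_premise_clause[OF premise_xz[OF spec_a_succ_neg[OF i(1) assms]]];
      simp add: normalized_def cons_size_to_cons)+

lemma
  assumes "Suc i < n"
  shows step_lifted_ac:
      "step_derivable 36 {clause {Neg (VD (Suc i)), Neg (VE (Suc i)), Neg (VC (Suc i)), Pos (VA i)}}"
    and step_lifted_bc:
      "step_derivable 36 {clause {Neg (VD (Suc i)), Neg (VE (Suc i)), Neg (VC (Suc i)), Pos (VB i)}}"
  by (rule derivable_resolve[OF step_c_mono[OF assms] step_lifted_a, where x = "VC i"]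
      derivable_resolve[OF step_c_mono[OF assms] step_lifted_b, where x = "VC i"];
      auto simp: resolvent_def consistent_def)+

lemma
  assumes "Suc i < n"
  shows step_a_fail_y: "step_derivable 5 {clause {Pos (VA (Suc i)), Neg (VA i), Pos (Y (Suc i))}}"
    and step_a_fail_not_x: "step_derivable 5
        {clause {Pos (VA (Suc i)), Neg (VA i), Neg (X (Suc i))}}"
    and step_b_fail_not_y: "step_derivable 5
        {clause {Pos (VB (Suc i)), Neg (VB i), Neg (Y (Suc i))}}"
    and step_b_fail_z: "step_derivable 5 {clause {Pos (VB (Suc i)), Neg (VB i), Pos (Z (Suc i))}}"
  by (rule derivable_premise_clause[OF premise_xy[OF spec_a_succ_pos[OF i(1) assms]]]
      derivable_premise_clause[OF premise_yz[OF spec_a_succ_pos[OF i(1) assms]]];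
      simp add: normalized_def cons_size_to_cons)+

(* Given a_i, the literal a_(i+1) can only fail through y_(i+1) and not x_(i+1), which is excluded
   by y_(i+1) --> z_(i+1) (from b_i) and z_(i+1) --> x_(i+1) (from c_(i+1)).  Each fact or_L below
   is the clause  not d_(i+1) | not e_(i+1) | not c_(i+1) | a_(i+1) | L. *)
lemma step_implies_a:
  assumes "Suc i < n"
  shows "step_derivable 140 {implies_a (Suc i)}"
proof -
  have or_y: "step_derivable 43
      {clause {Neg (VD (Suc i)), Neg (VE (Suc i)), Neg (VC (Suc i)), Pos (VA (Suc i)), Pos (Y (Suc i))}}"
    by (rule derivable_resolve[OF step_lifted_ac[OF assms] step_a_fail_y[OF assms], where x = "VA i"])
       (auto simp: resolvent_def consistent_def)
  have or_not_x: "step_derivable 43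
      {clause {Neg (VD (Suc i)), Neg (VE (Suc i)), Neg (VC (Suc i)), Pos (VA (Suc i)), Neg (X (Suc i))}}"
    by (rule derivable_resolve[OF step_lifted_ac[OF assms] step_a_fail_not_x[OF assms], where x = "VA i"])
       (auto simp: resolvent_def consistent_def)
  have or_not_z: "step_derivable 50
      {clause {Neg (VD (Suc i)), Neg (VE (Suc i)), Neg (VC (Suc i)), Pos (VA (Suc i)), Neg (Z (Suc i))}}"
    by (rule derivable_resolve[OF step_c_next_ge[OF assms] or_not_x, where x = "X (Suc i)"])
       (auto simp: resolvent_def consistent_def)
  have y_imp_z: "step_derivable 43
      {clause {Neg (VD (Suc i)), Neg (VE (Suc i)), Neg (VC (Suc i)), Pos (Z (Suc i)), Neg (Y (Suc i))}}"
    by (rule derivable_resolve[OF step_lifted_bc[OF assms] step_next_le_yz, where x = "VB i"])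
       (auto simp: resolvent_def consistent_def)
  have or_not_y: "step_derivable 95
      {clause {Neg (VD (Suc i)), Neg (VE (Suc i)), Neg (VC (Suc i)), Pos (VA (Suc i)), Neg (Y (Suc i))}}"
    by (rule derivable_resolve[OF y_imp_z or_not_z, where x = "Z (Suc i)"])
       (auto simp: resolvent_def consistent_def)
  show ?thesis
    unfolding implies_a_def[of "Suc i"]
    by (rule derivable_resolve[OF or_y or_not_y, where x = "Y (Suc i)"])
       (auto simp: resolvent_def consistent_def)
qed

(* Symmetrically, b_(i+1) can only fail through z_(i+1) and not y_(i+1), which is excluded by
   z_(i+1) --> x_(i+1) --> y_(i+1); here or_L is the clause
   not d_(i+1) | not e_(i+1) | not c_(i+1) | b_(i+1) | L. *)
lemma step_implies_b:
  assumes "Suc i < n"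
  shows "step_derivable 140 {implies_b (Suc i)}"
proof -
  have or_not_y: "step_derivable 43
      {clause {Neg (VD (Suc i)), Neg (VE (Suc i)), Neg (VC (Suc i)), Pos (VB (Suc i)), Neg (Y (Suc i))}}"
    by (rule derivable_resolve[OF step_lifted_bc[OF assms] step_b_fail_not_y[OF assms], where x = "VB i"])
       (auto simp: resolvent_def consistent_def)
  have or_z: "step_derivable 43
      {clause {Neg (VD (Suc i)), Neg (VE (Suc i)), Neg (VC (Suc i)), Pos (VB (Suc i)), Pos (Z (Suc i))}}"
    by (rule derivable_resolve[OF step_lifted_bc[OF assms] step_b_fail_z[OF assms], where x = "VB i"])
       (auto simp: resolvent_def consistent_def)
  have or_x: "step_derivable 50
      {clause {Neg (VD (Suc i)), Neg (VE (Suc i)), Neg (VC (Suc i)), Pos (VB (Suc i)), Pos (X (Suc i))}}"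
    by (rule derivable_resolve[OF or_z step_c_next_ge[OF assms], where x = "Z (Suc i)"])
       (auto simp: resolvent_def consistent_def)
  have x_imp_y: "step_derivable 43
      {clause {Neg (VD (Suc i)), Neg (VE (Suc i)), Neg (VC (Suc i)), Pos (Y (Suc i)), Neg (X (Suc i))}}"
    by (rule derivable_resolve[OF step_lifted_ac[OF assms] step_next_le_xy, where x = "VA i"])
       (auto simp: resolvent_def consistent_def)
  have or_y: "step_derivable 95
      {clause {Neg (VD (Suc i)), Neg (VE (Suc i)), Neg (VC (Suc i)), Pos (VB (Suc i)), Pos (Y (Suc i))}}"
    by (rule derivable_resolve[OF or_x x_imp_y, where x = "X (Suc i)"])
       (auto simp: resolvent_def consistent_def)
  show ?thesis
    unfolding implies_b_def[of "Suc i"]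
    by (rule derivable_resolve[OF or_y or_not_y, where x = "Y (Suc i)"])
       (auto simp: resolvent_def consistent_def)
qed

lemma step_invariant:
  assumes "Suc i < n"
  shows "step_derivable 500 {implies_f (Suc i), implies_a (Suc i), implies_b (Suc i)}"
proof -
  have "step_derivable 280 {implies_a (Suc i), implies_b (Suc i)}"
    using derivable_union[OF step_implies_a[OF assms] step_implies_b[OF assms] order_refl]
    by (simp add: insert_commute)
  from derivable_union[OF step_implies_f this, of 500] show ?thesis
    by (simp add: insert_commute)
qed

end

lemma invariant_derivable:
  "1 \<le> i \<Longrightarrow> i < n \<Longrightarrow>
   derivable (trans_premises n) [] 11 (500 * i) {implies_f i, implies_a i, implies_b i}"
proof (induction i rule: nat_induct_at_least)
  case base
  then have n: "2 \<le> n"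
    by simp
  have "derivable (trans_premises n) [] 11 44 {implies_a 1, implies_b 1}"
    using derivable_union[OF implies_a_1[OF n] implies_b_1[OF n], of 44] by (simp add: insert_commute)
  from derivable_union[OF implies_f_1 this, of 500] show ?case
    by (simp add: insert_commute)
next
  case (Suc i)
  then have i: "1 \<le> i" "i < n" "Suc i < n"
    by simp_all
  from derivable_cut[OF Suc.IH[OF i(2)] _ step_invariant[OF i], where N = "500 * Suc i"] show ?case
    by simp
qed

lemma implies_f_derivable:
  assumes "1 \<le> n"
  shows "derivable (trans_premises n) [] 11 (500 * n) {implies_f n}"
proof (cases "n = 1")
  case True
  then show ?thesis
    using derivable_mono[OF implies_f_1] by simp
next
  case False
  with assms obtain m where n: "n = Suc m" "1 \<le> m"
    by (cases n) auto
  then have "m < n"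
    by simp
  from derivable_cut[OF invariant_derivable[OF n(2) this] _ step_implies_f[OF n(2) this],
      where N = "500 * n"]
  show ?thesis
    using n by simp
qed

lemma to_cons_unit_pbc: "to_cons (unit_pbc x) = clause {Pos x}"
proof (rule cons_eqI)
  show "lhs (to_cons (unit_pbc x)) = lhs (clause {Pos x})"
    by (simp add: unit_pbc_def lhs_to_cons fun_eq_iff)
  show "degree (to_cons (unit_pbc x)) = degree (clause {Pos x})"
    by (simp add: unit_pbc_def degree_to_cons normalized_def degree_clause)
qed

lemma unit_f_derivable:
  assumes "1 \<le> n"
  shows "derivable (trans_premises n) [] 11 (500 * n + 8) {to_cons (unit_pbc (VF n))}"
proof -
  let ?derivable = "derivable (trans_premises n) [] 11"
  have d: "?derivable 2 {clause {Pos (VD n)}}"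
    and e: "?derivable 2 {clause {Pos (VE n)}}"
    by (rule derivable_premise_clause[OF premise_unit_d[unfolded unit_pbc_def]]
        derivable_premise_clause[OF premise_unit_e[unfolded unit_pbc_def]];
        simp add: normalized_def cons_size_to_cons)+
  have "?derivable (500 * n) {clause {Neg (VD n), Neg (VE n), Pos (VF n)}}"
    using implies_f_derivable[OF assms] by (simp add: implies_f_def)
  then have "?derivable (500 * n + 4) {clause {Neg (VE n), Pos (VF n)}}"
    by (rule derivable_resolve[OF d _, where x = "VD n"]) (auto simp: resolvent_def consistent_def)
  then have "?derivable (500 * n + 8) {clause {Pos (VF n)}}"
    by (rule derivable_resolve[OF e _, where x = "VE n"]) (auto simp: resolvent_def consistent_def)
  then show ?thesis
    by (simp add: to_cons_unit_pbc)
qed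

theorem lemma14:
  "\<exists>C::nat. \<forall>n\<ge>1. \<exists>\<pi>::var cons list.
     cp_derivation (trans_premises n) \<pi> \<and> \<pi> \<noteq> [] \<and>
     last \<pi> = to_cons (unit_pbc (VF n)) \<and>
     deriv_size \<pi> \<le> C * n"
proof (intro exI[of _ "11 * 508"] allI impI)
  fix n :: nat
  assume n: "1 \<le> n"
  obtain \<pi> where "cp_derivation (trans_premises n) \<pi>" "\<pi> \<noteq> []" "last \<pi> = to_cons (unit_pbc (VF n))"
      "deriv_size \<pi> \<le> 11 * (500 * n + 8)"
    using derivable_imp_derivation[OF unit_f_derivable[OF n]] by blast
  moreover have "11 * (500 * n + 8) \<le> 11 * 508 * n"
    using n by simp
  ultimately show "\<exists>\<pi>. cp_derivation (trans_premises n) \<pi> \<and> \<pi> \<noteq> [] \<and>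
      last \<pi> = to_cons (unit_pbc (VF n)) \<and> deriv_size \<pi> \<le> 11 * 508 * n"
    by (blast intro: order_trans)
qed

end
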